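(* Let $\alpha\in\mathbb{N}^n$. Then $1-T_\alpha(x)$ and $1+T_\alpha(x)$ both belong to $\mathcal Q(1-x_1^2,\dots,1-x_n^2)_{2|\alpha|}$, where $|\alpha|=\sum_i\alpha_i$.
   Context: $\Sigma[x]_r$ is the cone of sums of squares of polynomials in $x=(x_1,\dots,x_n)$ of total degree at most $r$; $\mathcal Q(1-x_1^2,\dots,1-x_n^2)_r=\Sigma[x]_r+\sum_{i=1}^n(1-x_i^2)\Sigma[x]_{r-2}$. $T_k(x)=\cos(k\arccos x)$ is the Chebyshev polynomial of the first kind and $T_\alpha(x)=\prod_{i=1}^nT_{\alpha_i}(x_i)$. *)

theory Defs
  imports Complex_Main
begin

text \<open>Points of R^n are functions x :: nat \<Rightarrow> real; only coordinates i < n matter.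
  Exponent vectors alpha in N^n are functions nat \<Rightarrow> nat, only entries i < n matter.\<close>

definition monomial_val :: "nat \<Rightarrow> (nat \<Rightarrow> nat) \<Rightarrow> (nat \<Rightarrow> real) \<Rightarrow> real" where
  "monomial_val n a x = (\<Prod>i<n. x i ^ a i)"

definition tdeg :: "nat \<Rightarrow> (nat \<Rightarrow> nat) \<Rightarrow> nat" where
  "tdeg n a = (\<Sum>i<n. a i)"

definition is_poly :: "nat \<Rightarrow> nat \<Rightarrow> ((nat \<Rightarrow> real) \<Rightarrow> real) \<Rightarrow> bool" where
  "is_poly n d p \<longleftrightarrow> (\<exists>A c. finite A \<and> (\<forall>a\<in>A. tdeg n a \<le> d) \<and>
      (\<forall>x. p x = (\<Sum>a\<in>A. c a * monomial_val n a x)))"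

text \<open>Sigma[x]_r: sums of squares of polynomials, the SOS polynomial having degree at most r,
  i.e. squares of polynomials of degree at most r div 2.\<close>
definition in_SOS :: "nat \<Rightarrow> nat \<Rightarrow> ((nat \<Rightarrow> real) \<Rightarrow> real) \<Rightarrow> bool" where
  "in_SOS n r s \<longleftrightarrow> (\<exists>(m::nat) q. (\<forall>j<m. is_poly n (r div 2) (q j)) \<and>
      (\<forall>x. s x = (\<Sum>j<m. (q j x)\<^sup>2)))"

definition in_Qbox :: "nat \<Rightarrow> nat \<Rightarrow> ((nat \<Rightarrow> real) \<Rightarrow> real) \<Rightarrow> bool" where
  "in_Qbox n r p \<longleftrightarrow> (\<exists>\<sigma>0 \<sigma>. in_SOS n r \<sigma>0 \<and> (\<forall>i<n. in_SOS n (r - 2) (\<sigma> i)) \<and>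
      (\<forall>x. p x = \<sigma>0 x + (\<Sum>i<n. (1 - (x i)\<^sup>2) * \<sigma> i x)))"

text \<open>Chebyshev polynomials of the first kind (polynomial T_k with T_k(cos t) = cos(k t)).\<close>
fun cheb :: "nat \<Rightarrow> real \<Rightarrow> real" where
  "cheb 0 x = 1"
| "cheb (Suc 0) x = x"
| "cheb (Suc (Suc k)) x = 2 * x * cheb (Suc k) x - cheb k x"

definition cheb_multi :: "nat \<Rightarrow> (nat \<Rightarrow> nat) \<Rightarrow> (nat \<Rightarrow> real) \<Rightarrow> real" where
  "cheb_multi n a x = (\<Prod>i<n. cheb (a i) (x i))"

end

theory Submission
  imports Defs
begin

(* With U_{k-1} the Chebyshev polynomial of the second kind, the Pell identity
   1 - T_k(y)^2 = (1 - y^2) U_{k-1}(y)^2 puts 1 - T_k(x_i)^2 into the quadratic module, and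
   1 - (P T_k)^2 = (1 - P^2) + P^2 (1 - T_k^2) propagates this coordinate by coordinate to
   1 - T_alpha^2.  Finally 1 + t = (1 - t^2)/2 + (1 + t)^2/2 for t = T_alpha and t = -T_alpha;
   all degrees stay within 2|alpha|. *)

lemma monomial_val_add:
  "monomial_val n (\<lambda>i. a i + b i) x = monomial_val n a x * monomial_val n b x"
  by (simp add: monomial_val_def power_add prod.distrib)

lemma tdeg_add: "tdeg n (\<lambda>i. a i + b i) = tdeg n a + tdeg n b"
  by (simp add: tdeg_def sum.distrib)

lemma is_polyI:
  assumes "finite S" "\<forall>s\<in>S. tdeg n (g s) \<le> d"
    and "\<forall>x. p x = (\<Sum>s\<in>S. f s * monomial_val n (g s) x)"
  shows "is_poly n d p"
  unfolding is_poly_def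
proof (intro exI conjI)
  show "finite (g ` S)" "\<forall>a\<in>g ` S. tdeg n a \<le> d"
    using assms(1,2) by auto
  show "\<forall>x. p x = (\<Sum>a\<in>g ` S. (\<Sum>s\<in>{s\<in>S. g s = a}. f s) * monomial_val n a x)"
  proof
    fix x
    have "p x = (\<Sum>s\<in>S. f s * monomial_val n (g s) x)"
      using assms(3) by simp
    also have "\<dots> = (\<Sum>a\<in>g ` S. \<Sum>s\<in>{s\<in>S. g s = a}. f s * monomial_val n (g s) x)"
      by (rule sum.image_gen[OF assms(1)])
    also have "\<dots> = (\<Sum>a\<in>g ` S. (\<Sum>s\<in>{s\<in>S. g s = a}. f s) * monomial_val n a x)"
      by (rule sum.cong) (auto simp: sum_distrib_right)
    finally show "p x = (\<Sum>a\<in>g ` S. (\<Sum>s\<in>{s\<in>S. g s = a}. f s) * monomial_val n a x)" .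
  qed
qed

lemma is_poly_mono: "is_poly n d p \<Longrightarrow> d \<le> d' \<Longrightarrow> is_poly n d' p"
  unfolding is_poly_def by (meson order_trans)

lemma is_poly_const: "is_poly n d (\<lambda>x. c)"
  by (rule is_polyI[where S = "{()}" and g = "\<lambda>_ _. 0" and f = "\<lambda>_. c"])
     (simp_all add: tdeg_def monomial_val_def)

lemma is_poly_var:
  assumes "i < n"
  shows "is_poly n 1 (\<lambda>x. x i)"
proof (rule is_polyI[where S = "{()}" and g = "\<lambda>_ j. if j = i then 1 else 0" and f = "\<lambda>_. 1"])
  show "\<forall>s\<in>{()}. tdeg n (\<lambda>j. if j = i then 1 else 0) \<le> 1"
    using assms by (simp add: tdeg_def)
  have "monomial_val n (\<lambda>j. if j = i then 1 else 0) x = (\<Prod>j<n. if j = i then x j else 1)" for x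
    unfolding monomial_val_def by (rule prod.cong) auto
  then show "\<forall>x. x i = (\<Sum>s\<in>{()}. 1 * monomial_val n (\<lambda>j. if j = i then 1 else 0) x)"
    using assms by (simp add: prod.delta)
qed simp

lemma is_poly_add:
  assumes "is_poly n d p" "is_poly n d q"
  shows "is_poly n d (\<lambda>x. p x + q x)"
proof -
  from assms obtain A c B e where
    A: "finite A" "\<forall>a\<in>A. tdeg n a \<le> d" "\<forall>x. p x = (\<Sum>a\<in>A. c a * monomial_val n a x)" and
    B: "finite B" "\<forall>a\<in>B. tdeg n a \<le> d" "\<forall>x. q x = (\<Sum>a\<in>B. e a * monomial_val n a x)"
    unfolding is_poly_def by blast
  show ?thesis
    by (rule is_polyI[where S = "A <+> B" and g = "case_sum id id" and f = "case_sum c e"])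
       (use A B in \<open>auto simp: sum.Plus\<close>)
qed

lemma is_poly_mult:
  assumes "is_poly n d p" "is_poly n d' q"
  shows "is_poly n (d + d') (\<lambda>x. p x * q x)"
proof -
  from assms obtain A c B e where
    A: "finite A" "\<forall>a\<in>A. tdeg n a \<le> d" "\<forall>x. p x = (\<Sum>a\<in>A. c a * monomial_val n a x)" and
    B: "finite B" "\<forall>a\<in>B. tdeg n a \<le> d'" "\<forall>x. q x = (\<Sum>a\<in>B. e a * monomial_val n a x)"
    unfolding is_poly_def by blast
  have "p x * q x = (\<Sum>(a, b)\<in>A \<times> B. c a * e b * monomial_val n (\<lambda>i. a i + b i) x)" for x
    using A B by (simp add: sum_product sum.cartesian_product monomial_val_add ac_simps)
  then show ?thesis
    by (intro is_polyI[where S = "A \<times> B" and g = "\<lambda>(a, b) i. a i + b i" and f = "\<lambda>(a, b). c a * e b"])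
       (use A B in \<open>auto simp: tdeg_add add_mono split_def\<close>)
qed

lemma is_poly_cmult: "is_poly n d p \<Longrightarrow> is_poly n d (\<lambda>x. c * p x)"
  using is_poly_mult[OF is_poly_const[of n 0 c]] by simp

lemma is_poly_diff: "is_poly n d p \<Longrightarrow> is_poly n d q \<Longrightarrow> is_poly n d (\<lambda>x. p x - q x)"
  using is_poly_add[OF _ is_poly_cmult[of n d q "-1"]] by simp

lemma sum_lessThan_add:
  fixes f :: "nat \<Rightarrow> 'a::comm_monoid_add"
  shows "(\<Sum>j<m + k. f j) = (\<Sum>j<m. f j) + (\<Sum>j<k. f (m + j))"
  by (induction k) (simp_all add: add.assoc)

lemma in_SOS_zero: "in_SOS n r (\<lambda>x. 0)"
  unfolding in_SOS_def by (rule exI[of _ 0]) simp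

lemma in_SOS_square: "is_poly n (r div 2) q \<Longrightarrow> in_SOS n r (\<lambda>x. (q x)\<^sup>2)"
  unfolding in_SOS_def by (intro exI[of _ 1] exI[of _ "\<lambda>_. q"]) simp

lemma in_SOS_mono: "in_SOS n r s \<Longrightarrow> r \<le> r' \<Longrightarrow> in_SOS n r' s"
  unfolding in_SOS_def by (meson div_le_mono is_poly_mono)

lemma in_SOS_scale:
  assumes "in_SOS n r s" "c \<ge> 0"
  shows "in_SOS n r (\<lambda>x. c * s x)"
proof -
  from assms(1) obtain m :: nat and q where
    q: "\<forall>j<m. is_poly n (r div 2) (q j)" "\<forall>x. s x = (\<Sum>j<m. (q j x)\<^sup>2)"
    unfolding in_SOS_def by blast
  have "c * s x = (\<Sum>j<m. (sqrt c * q j x)\<^sup>2)" for x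
    using q(2) assms(2) by (simp add: power_mult_distrib sum_distrib_left)
  with q(1) show ?thesis
    unfolding in_SOS_def by (intro exI[of _ m] exI[of _ "\<lambda>j x. sqrt c * q j x"]) (simp add: is_poly_cmult)
qed

lemma in_SOS_add:
  assumes "in_SOS n r s" "in_SOS n r t"
  shows "in_SOS n r (\<lambda>x. s x + t x)"
proof -
  from assms obtain m m' :: nat and q q' where
    q: "\<forall>j<m. is_poly n (r div 2) (q j)" "\<forall>x. s x = (\<Sum>j<m. (q j x)\<^sup>2)" and
    q': "\<forall>j<m'. is_poly n (r div 2) (q' j)" "\<forall>x. t x = (\<Sum>j<m'. (q' j x)\<^sup>2)"
    unfolding in_SOS_def by blast
  define Q where "Q j = (if j < m then q j else q' (j - m))" for j
  have "\<forall>j<m + m'. is_poly n (r div 2) (Q j)"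
    using q(1) q'(1) by (simp add: Q_def)
  moreover have "s x + t x = (\<Sum>j<m + m'. (Q j x)\<^sup>2)" for x
    using q(2) q'(2) by (simp add: sum_lessThan_add Q_def)
  ultimately show ?thesis
    unfolding in_SOS_def by blast
qed

lemma in_Qbox_mono:
  assumes "in_Qbox n r p" "r \<le> r'"
  shows "in_Qbox n r' p"
proof -
  from assms(1) obtain s0 s where
    "in_SOS n r s0" "\<forall>i<n. in_SOS n (r - 2) (s i)" "\<forall>x. p x = s0 x + (\<Sum>i<n. (1 - (x i)\<^sup>2) * s i x)"
    unfolding in_Qbox_def by blast
  with assms(2) show ?thesis
    unfolding in_Qbox_def by (intro exI[of _ s0] exI[of _ s]) (auto intro: in_SOS_mono diff_le_mono)
qed

lemma in_Qbox_of_SOS: "in_SOS n r s \<Longrightarrow> in_Qbox n r s"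
  unfolding in_Qbox_def by (intro exI[of _ s] exI[of _ "\<lambda>_ _. 0"]) (simp add: in_SOS_zero)

lemma in_Qbox_generator_mult:
  assumes "i < n" "in_SOS n (r - 2) s"
  shows "in_Qbox n r (\<lambda>x. (1 - (x i)\<^sup>2) * s x)"
proof -
  define \<sigma> where "\<sigma> j = (if j = i then s else (\<lambda>_. 0))" for j
  have "(\<Sum>j<n. (1 - (x j)\<^sup>2) * \<sigma> j x) = (\<Sum>j<n. if j = i then (1 - (x i)\<^sup>2) * s x else 0)" for x
    by (rule sum.cong) (simp_all add: \<sigma>_def)
  then have "(\<Sum>j<n. (1 - (x j)\<^sup>2) * \<sigma> j x) = (1 - (x i)\<^sup>2) * s x" for x
    using assms(1) by simp
  then show ?thesis
    unfolding in_Qbox_def using assms(2)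
    by (intro exI[of _ "\<lambda>_. 0"] exI[of _ \<sigma>]) (simp add: \<sigma>_def in_SOS_zero)
qed

lemma in_Qbox_add:
  assumes "in_Qbox n r p" "in_Qbox n r q"
  shows "in_Qbox n r (\<lambda>x. p x + q x)"
proof -
  from assms obtain s0 s t0 t where
    "in_SOS n r s0" "\<forall>i<n. in_SOS n (r - 2) (s i)" "\<forall>x. p x = s0 x + (\<Sum>i<n. (1 - (x i)\<^sup>2) * s i x)"
    "in_SOS n r t0" "\<forall>i<n. in_SOS n (r - 2) (t i)" "\<forall>x. q x = t0 x + (\<Sum>i<n. (1 - (x i)\<^sup>2) * t i x)"
    unfolding in_Qbox_def by blast
  then show ?thesis
    unfolding in_Qbox_def
    by (intro exI[of _ "\<lambda>x. s0 x + t0 x"] exI[of _ "\<lambda>i x. s i x + t i x"])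
       (simp add: in_SOS_add sum.distrib distrib_left)
qed

lemma in_Qbox_scale:
  assumes "in_Qbox n r p" "c \<ge> 0"
  shows "in_Qbox n r (\<lambda>x. c * p x)"
proof -
  from assms(1) obtain s0 s where
    "in_SOS n r s0" "\<forall>i<n. in_SOS n (r - 2) (s i)" "\<forall>x. p x = s0 x + (\<Sum>i<n. (1 - (x i)\<^sup>2) * s i x)"
    unfolding in_Qbox_def by blast
  with assms(2) show ?thesis
    unfolding in_Qbox_def
    by (intro exI[of _ "\<lambda>x. c * s0 x"] exI[of _ "\<lambda>i x. c * s i x"])
       (simp add: in_SOS_scale distrib_left sum_distrib_left mult.left_commute)
qed

lemma in_Qbox_one_add_of_one_minus_sq:
  assumes "is_poly n d t" "in_Qbox n (2 * d) (\<lambda>x. 1 - (t x)\<^sup>2)"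
  shows "in_Qbox n (2 * d) (\<lambda>x. 1 + t x)"
proof -
  have "in_Qbox n (2 * d) (\<lambda>x. (1 + t x)\<^sup>2)"
    by (intro in_Qbox_of_SOS in_SOS_square) (simp add: is_poly_add[OF is_poly_const assms(1)])
  then have "in_Qbox n (2 * d) (\<lambda>x. 1/2 * (1 + t x)\<^sup>2)"
    by (rule in_Qbox_scale) simp
  moreover have "in_Qbox n (2 * d) (\<lambda>x. 1/2 * (1 - (t x)\<^sup>2))"
    by (rule in_Qbox_scale[OF assms(2)]) simp
  ultimately have "in_Qbox n (2 * d) (\<lambda>x. 1/2 * (1 - (t x)\<^sup>2) + 1/2 * (1 + t x)\<^sup>2)"
    using in_Qbox_add by blast
  moreover have "1/2 * (1 - (t x)\<^sup>2) + 1/2 * (1 + t x)\<^sup>2 = 1 + t x" for x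
    by (simp add: power2_eq_square field_simps)
  ultimately show ?thesis by simp
qed

(* chebU k is U_{k-1}; the index shift gives chebU 0 = 0, so the Pell identity holds for all k. *)
fun chebU :: "nat \<Rightarrow> real \<Rightarrow> real" where
  "chebU 0 y = 0"
| "chebU (Suc k) y = y * chebU k y + cheb k y"

lemma cheb_Suc_chebU: "cheb (Suc k) y = y * cheb k y + (y\<^sup>2 - 1) * chebU k y"
proof (induction k)
  case (Suc k)
  have "cheb (Suc (Suc k)) y = 2 * y * cheb (Suc k) y - cheb k y" by simp
  also have "\<dots> = y * cheb (Suc k) y + y * (y * cheb k y + (y\<^sup>2 - 1) * chebU k y) - cheb k y"
    using Suc.IH by simp
  also have "\<dots> = y * cheb (Suc k) y + (y\<^sup>2 - 1) * chebU (Suc k) y"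
    by (simp add: power2_eq_square algebra_simps)
  finally show ?case .
qed simp

lemma cheb_pell: "1 - (cheb k y)\<^sup>2 = (1 - y\<^sup>2) * (chebU k y)\<^sup>2"
proof (induction k)
  case (Suc k)
  have "(cheb (Suc k) y)\<^sup>2 = (cheb k y)\<^sup>2 - (y\<^sup>2 - 1) * (chebU k y)\<^sup>2 + (y\<^sup>2 - 1) * (chebU (Suc k) y)\<^sup>2"
    unfolding cheb_Suc_chebU chebU.simps by (simp add: power2_eq_square algebra_simps)
  with Suc.IH show ?case by (simp add: algebra_simps)
qed simp

lemma is_poly_cheb: "i < n \<Longrightarrow> is_poly n k (\<lambda>x. cheb k (x i))"
proof (induction k rule: induct_nat_012)
  case (ge2 k)
  have "is_poly n (1 + Suc k) (\<lambda>x. 2 * x i * cheb (Suc k) (x i))"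
    using is_poly_mult[OF is_poly_cmult[OF is_poly_var[OF ge2.prems]] ge2.IH(2)[OF ge2.prems]] by simp
  moreover have "is_poly n (1 + Suc k) (\<lambda>x. cheb k (x i))"
    using is_poly_mono[OF ge2.IH(1)[OF ge2.prems]] by simp
  ultimately show ?case
    using is_poly_diff by fastforce
qed (simp_all add: is_poly_const is_poly_var[unfolded One_nat_def])

lemma is_poly_chebU: "i < n \<Longrightarrow> is_poly n k (\<lambda>x. chebU (Suc k) (x i))"
proof (induction k)
  case (Suc k)
  have "is_poly n (1 + k) (\<lambda>x. x i * chebU (Suc k) (x i))"
    using is_poly_mult[OF is_poly_var Suc.IH] Suc.prems by simp
  with is_poly_add[OF _ is_poly_cheb[OF Suc.prems]] show ?case by simp
qed (simp add: is_poly_const)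

lemma is_poly_cheb_prod:
  "m \<le> n \<Longrightarrow> is_poly n (\<Sum>i<m. alpha i) (\<lambda>x. \<Prod>i<m. cheb (alpha i) (x i))"
proof (induction m)
  case (Suc m)
  then show ?case
    using is_poly_mult[OF _ is_poly_cheb] by simp
qed (simp add: is_poly_const)

lemma in_Qbox_one_minus_sq_mult_cheb:
  assumes "i < n" "is_poly n d p" "in_Qbox n (2 * d) (\<lambda>x. 1 - (p x)\<^sup>2)"
  shows "in_Qbox n (2 * (d + k)) (\<lambda>x. 1 - (p x * cheb k (x i))\<^sup>2)"
proof (cases k)
  case 0
  with assms(3) show ?thesis by simp
next
  case (Suc j)
  have "is_poly n (d + j) (\<lambda>x. p x * chebU k (x i))"
    using is_poly_mult[OF assms(2) is_poly_chebU[OF assms(1)]] Suc by simp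
  then have "in_Qbox n (2 * (d + k)) (\<lambda>x. (1 - (x i)\<^sup>2) * (p x * chebU k (x i))\<^sup>2)"
    using Suc by (intro in_Qbox_generator_mult[OF assms(1)] in_SOS_square) simp
  from in_Qbox_add[OF in_Qbox_mono[OF assms(3)] this]
  have "in_Qbox n (2 * (d + k))
          (\<lambda>x. 1 - (p x)\<^sup>2 + (1 - (x i)\<^sup>2) * (p x * chebU k (x i))\<^sup>2)"
    by simp
  moreover have "1 - (p x)\<^sup>2 + (1 - (x i)\<^sup>2) * (p x * chebU k (x i))\<^sup>2
                   = 1 - (p x * cheb k (x i))\<^sup>2" for x
  proof -
    have "(1 - (x i)\<^sup>2) * (p x * chebU k (x i))\<^sup>2 = (p x)\<^sup>2 * (1 - (cheb k (x i))\<^sup>2)"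
      by (simp add: cheb_pell power_mult_distrib)
    then show ?thesis
      by (simp add: power_mult_distrib right_diff_distrib)
  qed
  ultimately show ?thesis by simp
qed

lemma in_Qbox_one_minus_cheb_prod_sq:
  "m \<le> n \<Longrightarrow> in_Qbox n (2 * (\<Sum>i<m. alpha i)) (\<lambda>x. 1 - (\<Prod>i<m. cheb (alpha i) (x i))\<^sup>2)"
proof (induction m)
  case 0
  then show ?case by (simp add: in_Qbox_of_SOS in_SOS_zero)
next
  case (Suc m)
  then show ?case
    using in_Qbox_one_minus_sq_mult_cheb[OF _ is_poly_cheb_prod] by simp
qed

theorem lemma6:
  fixes n :: nat and alpha :: "nat \<Rightarrow> nat"
  shows "in_Qbox n (2 * tdeg n alpha) (\<lambda>x. 1 - cheb_multi n alpha x) \<and>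
         in_Qbox n (2 * tdeg n alpha) (\<lambda>x. 1 + cheb_multi n alpha x)"
proof -
  have poly: "is_poly n (tdeg n alpha) (cheb_multi n alpha)"
    using is_poly_cheb_prod[of n n alpha] by (simp add: cheb_multi_def[abs_def] tdeg_def)
  have sq: "in_Qbox n (2 * tdeg n alpha) (\<lambda>x. 1 - (cheb_multi n alpha x)\<^sup>2)"
    using in_Qbox_one_minus_cheb_prod_sq[of n n alpha] by (simp add: cheb_multi_def tdeg_def)
  have "in_Qbox n (2 * tdeg n alpha) (\<lambda>x. 1 + - cheb_multi n alpha x)"
    using in_Qbox_one_add_of_one_minus_sq[OF is_poly_cmult[OF poly, of "-1"]] sq by simp
  moreover have "in_Qbox n (2 * tdeg n alpha) (\<lambda>x. 1 + cheb_multi n alpha x)"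
    using in_Qbox_one_add_of_one_minus_sq[OF poly sq] .
  ultimately show ?thesis by simp
qed

end
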